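(* Let $n\ge2$ be an integer. (a) $\mathrm{Sym}^n\mathbb{R}[e_1]\cap \mathrm{Sym}^n\mathbb{H}\cdot\triangle^{(n)}_\mathbb{H}=\{0\}$. (b) $\mathrm{Sym}^n\mathbb{H}\cap \mathrm{Sym}^n\mathbb{O}\cdot\triangle^{(n)}_\mathbb{O}=\{0\}$.
   Context: $\mathbb{O}$ is the Cayley octonion algebra over $\mathbb{R}$ with basis $e_0=1,e_1,\dots,e_7$; $1,e_1,e_2,e_3$ span the quaternion subalgebra $\mathbb{H}$ ($e_i^2=-1$, $e_1e_2=-e_2e_1=e_3$, $e_2e_3=-e_3e_2=e_1$, $e_3e_1=-e_1e_3=e_2$), $\mathbb{O}=\mathbb{H}\oplus\mathbb{H}e_4$ is the Cayley–Dickson double with $e_4^2=-1$, $e_{i+4}=e_ie_4$ ($i=1,2,3$), $(x+ye_4)(z+we_4)=(xz-\bar wy)+(wx+y\bar z)e_4$; $\mathbb{R}[e_1]$ is the subalgebra spanned by $1,e_1$. For $\mathcal A\in\{\mathbb{R}[e_1],\mathbb{H},\mathbb{O}\}$, $\mathcal A^{\otimes n}$ is the $n$-fold tensor power over $\mathbb{R}$ with componentwise multiplication, $\mathfrak S_n$ acts by permuting factors, $x^\vee=\frac1{n!}\sum_{\sigma\in\mathfrak S_n}\sigma(x)$, and $\mathrm{Sym}^n\mathcal A$ is the subalgebra of fixed tensors; $\mathrm{Sym}^n\mathbb{R}[e_1]\subset\mathrm{Sym}^n\mathbb{H}\subset\mathrm{Sym}^n\mathbb{O}$. For $\mathcal C\in\{\mathbb{H},\mathbb{O}\}$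 of dimension $d$, $\triangle_{\mathcal C}=\frac1d\sum_{i=0}^{d-1}e_i\otimes e_i$ and $\triangle^{(n)}_{\mathcal C}=(\triangle_{\mathcal C}\otimes1^{\otimes(n-2)})^\vee$; $\mathrm{Sym}^n\mathcal C\cdot\triangle^{(n)}_{\mathcal C}=\{r\triangle^{(n)}_{\mathcal C}: r\in\mathrm{Sym}^n\mathcal C\}$. *)

theory Defs
  imports Complex_Main "HOL-Combinatorics.Permutations"
begin

text \<open>Elements of the algebras are coefficient vectors on the standard basis
  e_0 = 1, e_1, ..., e_{d-1}: a function nat => real, meaningful on indices < d.\<close>

definition unitv :: "nat \<Rightarrow> nat \<Rightarrow> real" where
  "unitv i = (\<lambda>j. if j = i then 1 else 0)"

text \<open>Hamilton quaternion product (basis 1, e1, e2, e3 with e1e2 = e3, e2e3 = e1, e3e1 = e2).\<close>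
definition qmul :: "(nat \<Rightarrow> real) \<Rightarrow> (nat \<Rightarrow> real) \<Rightarrow> nat \<Rightarrow> real" where
  "qmul p q = (\<lambda>k.
     if k = 0 then p 0 * q 0 - p 1 * q 1 - p 2 * q 2 - p 3 * q 3
     else if k = 1 then p 0 * q 1 + p 1 * q 0 + p 2 * q 3 - p 3 * q 2
     else if k = 2 then p 0 * q 2 - p 1 * q 3 + p 2 * q 0 + p 3 * q 1
     else if k = 3 then p 0 * q 3 + p 1 * q 2 - p 2 * q 1 + p 3 * q 0
     else 0)"

definition qconj :: "(nat \<Rightarrow> real) \<Rightarrow> nat \<Rightarrow> real" where
  "qconj p = (\<lambda>k. if k = 0 then p 0 else if k < 4 then - p k else 0)"

definition qadd :: "(nat \<Rightarrow> real) \<Rightarrow> (nat \<Rightarrow> real) \<Rightarrow> nat \<Rightarrow> real" where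
  "qadd p q = (\<lambda>k. p k + q k)"

text \<open>Octonion x + y e4 (x, y quaternions, e_{i+4} = e_i e_4) has coefficients
  x_0..x_3 at 0..3 and y_0..y_3 at 4..7.  Cayley--Dickson product
  (x + y e4)(z + w e4) = (xz - conj(w) y) + (w x + y conj(z)) e4.\<close>
definition ofst :: "(nat \<Rightarrow> real) \<Rightarrow> nat \<Rightarrow> real" where
  "ofst a = (\<lambda>k. if k < 4 then a k else 0)"

definition osnd :: "(nat \<Rightarrow> real) \<Rightarrow> nat \<Rightarrow> real" where
  "osnd a = (\<lambda>k. if k < 4 then a (k + 4) else 0)"

definition omul :: "(nat \<Rightarrow> real) \<Rightarrow> (nat \<Rightarrow> real) \<Rightarrow> nat \<Rightarrow> real" where
  "omul a b = (let x = ofst a; y = osnd a; z = ofst b; w = osnd b;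
                   u = (\<lambda>k. qmul x z k - qmul (qconj w) y k);
                   v = (\<lambda>k. qmul w x k + qmul y (qconj z) k)
               in (\<lambda>k. if k < 4 then u k else if k < 8 then v (k - 4) else 0))"

definition bmulH :: "nat \<Rightarrow> nat \<Rightarrow> nat \<Rightarrow> real" where
  "bmulH i j = qmul (unitv i) (unitv j)"

definition bmulO :: "nat \<Rightarrow> nat \<Rightarrow> nat \<Rightarrow> real" where
  "bmulO i j = omul (unitv i) (unitv j)"

text \<open>n-fold tensor powers: an element of A^{\<otimes>n} (dim A = d) is a coefficient
  function on basis words w = [w_0,...,w_{n-1}] with w_k < d (basis tensor
  e_{w_0} \<otimes> ... \<otimes> e_{w_{n-1}}), zero on all other lists.\<close>
definition words :: "nat \<Rightarrow> nat \<Rightarrow> nat list set" where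
  "words n d = {w. length w = n \<and> (\<forall>a\<in>set w. a < d)}"

definition is_tensor :: "nat \<Rightarrow> nat \<Rightarrow> (nat list \<Rightarrow> real) \<Rightarrow> bool" where
  "is_tensor n d x \<longleftrightarrow> (\<forall>w. w \<notin> words n d \<longrightarrow> x w = 0)"

text \<open>Componentwise multiplication in A^{\<otimes>n}, extended bilinearly.\<close>
definition tmul :: "(nat \<Rightarrow> nat \<Rightarrow> nat \<Rightarrow> real) \<Rightarrow> nat \<Rightarrow> nat
                    \<Rightarrow> (nat list \<Rightarrow> real) \<Rightarrow> (nat list \<Rightarrow> real) \<Rightarrow> nat list \<Rightarrow> real" where
  "tmul bm n d x y = (\<lambda>u. if u \<in> words n d then
      (\<Sum>w\<in>words n d. \<Sum>v\<in>words n d. x w * y v * (\<Prod>k<n. bm (w ! k) (v ! k) (u ! k)))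
      else 0)"

definition permw :: "nat \<Rightarrow> (nat \<Rightarrow> nat) \<Rightarrow> nat list \<Rightarrow> nat list" where
  "permw n \<sigma> w = map (\<lambda>k. w ! \<sigma> k) [0..<n]"

definition Sym :: "nat \<Rightarrow> nat \<Rightarrow> (nat list \<Rightarrow> real) set" where
  "Sym n d = {x. is_tensor n d x \<and>
     (\<forall>\<sigma> w. \<sigma> permutes {..<n} \<longrightarrow> w \<in> words n d \<longrightarrow> x (permw n \<sigma> w) = x w)}"

definition symz :: "nat \<Rightarrow> (nat list \<Rightarrow> real) \<Rightarrow> nat list \<Rightarrow> real" where
  "symz n x = (\<lambda>w. (1 / fact n) * (\<Sum>\<sigma>\<in>{\<sigma>. \<sigma> permutes {..<n}}. x (permw n \<sigma> w)))"

text \<open>\<triangle>_C \<otimes> 1^{\<otimes>(n-2)} with \<triangle>_C = (1/d) \<Sum>_i e_i \<otimes> e_i, and \<triangle>^{(n)}_C.\<close>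
definition delta0 :: "nat \<Rightarrow> nat \<Rightarrow> nat list \<Rightarrow> real" where
  "delta0 n d = (\<lambda>w. if w \<in> words n d \<and> w ! 0 = w ! 1 \<and> (\<forall>k\<in>{2..<n}. w ! k = 0)
                     then 1 / real d else 0)"

definition delta :: "nat \<Rightarrow> nat \<Rightarrow> nat list \<Rightarrow> real" where
  "delta n d = symz n (delta0 n d)"

end

theory Submission
  imports Defs
begin

text \<open>Let \<open>D\<close> be \<open>\<triangle> \<otimes> 1 \<otimes> \<dots> \<otimes> 1\<close>, whose symmetrisation is \<open>\<triangle>\<^sup>(\<^sup>n\<^sup>)\<close>, and let \<open>r\<close> be
  symmetric. At a word \<open>p q N\<close> the coordinate of \<open>r D\<close> is \<open>[p = q] / d\<close> times the partial
  trace \<open>\<Sum>\<^sub>a r(a a N)\<close>: right multiplication by the unit \<open>e\<^sub>0\<close> pins down the last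
  \<open>n - 2\<close> letters, and the composition identity
  \<open>\<langle>x\<^sup>* z, y\<^sup>* w\<rangle> + \<langle>y\<^sup>* z, x\<^sup>* w\<rangle> = 2 \<langle>x, y\<rangle> \<langle>z, w\<rangle>\<close> contracts the first two slots.
  Hence the coordinate of \<open>r \<triangle>\<^sup>(\<^sup>n\<^sup>)\<close> at \<open>u\<close> averages the partial traces over the
  rearrangements of \<open>u\<close> with equal first two letters. If \<open>r \<triangle>\<^sup>(\<^sup>n\<^sup>)\<close> lies in the symmetric
  power of the span of \<open>e\<^sub>0, \<dots>, e\<^sub>b\<^sub>-\<^sub>1\<close>, its coordinate at \<open>b b N\<close> is zero. The
  rearrangements starting with \<open>b b\<close> contribute the partial trace at \<open>N\<close>; all others
  contribute a partial trace at a word with two more letters \<open>b\<close>, which vanishes by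
  induction on the number of letters different from \<open>b\<close>. So all partial traces of \<open>r\<close>
  vanish, and with them \<open>r \<triangle>\<^sup>(\<^sup>n\<^sup>)\<close>.\<close>

unbundle bit_operations_syntax

lemma length_permw [simp]: "length (permw n \<sigma> w) = n"
  by (simp add: permw_def)

lemma nth_permw [simp]: "k < n \<Longrightarrow> permw n \<sigma> w ! k = w ! \<sigma> k"
  by (simp add: permw_def)

lemma permw_eq_permute_list: "length w = n \<Longrightarrow> permw n \<sigma> w = permute_list \<sigma> w"
  by (simp add: permw_def permute_list_def)

lemma mem_words_iff: "w \<in> words n d \<longleftrightarrow> length w = n \<and> (\<forall>k<n. w ! k < d)"
  by (auto simp: words_def all_set_conv_all_nth)

lemma finite_words: "finite (words n d)"
proof -
  have "words n d = {w. set w \<subseteq> {..<d} \<and> length w = n}"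
    by (auto simp: words_def)
  then show ?thesis
    using finite_lists_length_eq[of "{..<d}" n] by simp
qed

lemma Cons_Cons_in_words_iff:
  "a # b # N \<in> words n d \<longleftrightarrow> a < d \<and> b < d \<and> N \<in> words (n - 2) d \<and> 2 \<le> n"
  by (auto simp: words_def)

lemma drop_in_words: "w \<in> words n d \<Longrightarrow> drop m w \<in> words (n - m) d"
  by (auto simp: words_def dest: in_set_dropD)

lemma permw_in_words:
  assumes "\<sigma> permutes {..<n}" and "w \<in> words n d"
  shows "permw n \<sigma> w \<in> words n d"
  using assms by (auto simp: words_def permw_eq_permute_list)

lemma mset_permw: "\<sigma> permutes {..<n} \<Longrightarrow> length w = n \<Longrightarrow> mset (permw n \<sigma> w) = mset w"
  by (simp add: permw_eq_permute_list)

lemma bij_betw_permw: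
  assumes \<sigma>: "\<sigma> permutes {..<n}"
  shows "bij_betw (permw n \<sigma>) (words n d) (words n d)"
proof (rule bij_betwI[where g = "permw n (inv \<sigma>)"])
  have \<sigma>': "inv \<sigma> permutes {..<n}"
    using \<sigma> by (rule permutes_inv)
  show "permw n \<sigma> \<in> words n d \<rightarrow> words n d" "permw n (inv \<sigma>) \<in> words n d \<rightarrow> words n d"
    using permw_in_words[OF \<sigma>] permw_in_words[OF \<sigma>'] by auto
  fix w assume "w \<in> words n d"
  then have n: "length w = n"
    by (simp add: words_def)
  show "permw n (inv \<sigma>) (permw n \<sigma> w) = w" "permw n \<sigma> (permw n (inv \<sigma>) w) = w"
    using permute_list_compose[of \<sigma> w "inv \<sigma>"] permute_list_compose[of "inv \<sigma>" w \<sigma>]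
      \<sigma> \<sigma>' permutes_inv_o[OF \<sigma>] n
    by (simp_all add: permw_eq_permute_list)
qed

lemma Sym_eq_if_mset_eq:
  assumes "r \<in> Sym n d" and "v \<in> words n d" and "mset w = mset v"
  shows "r w = r v"
proof -
  obtain \<sigma> where \<sigma>: "\<sigma> permutes {..<length v}" "permute_list \<sigma> v = w"
    using mset_eq_permutation[OF assms(3)] .
  have "length v = n"
    using assms(2) by (simp add: words_def)
  then have "permw n \<sigma> v = w"
    using \<sigma> by (simp add: permw_eq_permute_list)
  then show ?thesis
    using assms(1,2) \<sigma>(1) \<open>length v = n\<close> by (auto simp: Sym_def)
qed

lemma tmul_permw:
  assumes r: "r \<in> Sym n d" and \<sigma>: "\<sigma> permutes {..<n}" and u: "u \<in> words n d"
  shows "tmul bm n d r (\<lambda>v. y (permw n \<sigma> v)) u = tmul bm n d r y (permw n \<sigma> u)"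
proof -
  let ?p = "permw n \<sigma>"
  define G where "G = (\<lambda>w v. r w * y v * (\<Prod>k<n. bm (w ! k) (v ! k) (?p u ! k)))"
  have G: "r w * y (?p v) * (\<Prod>k<n. bm (w ! k) (v ! k) (u ! k)) = G (?p w) (?p v)"
    if "w \<in> words n d" for w v
  proof -
    have "r (?p w) = r w"
      using r \<sigma> that by (simp add: Sym_def)
    moreover have "(\<Prod>k<n. bm (w ! \<sigma> k) (v ! \<sigma> k) (u ! \<sigma> k)) = (\<Prod>k<n. bm (w ! k) (v ! k) (u ! k))"
      using prod.reindex_bij_betw[OF permutes_imp_bij[OF \<sigma>]] by simp
    ultimately show ?thesis
      by (simp add: G_def)
  qed
  have "tmul bm n d r (\<lambda>v. y (?p v)) u = (\<Sum>w\<in>words n d. \<Sum>v\<in>words n d. G (?p w) (?p v))"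
    using u by (simp add: tmul_def G cong: sum.cong)
  also have "\<dots> = (\<Sum>w\<in>words n d. \<Sum>v\<in>words n d. G (?p w) v)"
    by (simp add: sum.reindex_bij_betw[OF bij_betw_permw[OF \<sigma>]])
  also have "\<dots> = (\<Sum>w\<in>words n d. \<Sum>v\<in>words n d. G w v)"
    by (rule sum.reindex_bij_betw[OF bij_betw_permw[OF \<sigma>]])
  also have "\<dots> = tmul bm n d r y (?p u)"
    using permw_in_words[OF \<sigma> u] by (simp add: tmul_def G_def)
  finally show ?thesis .
qed

lemma tmul_scaled_sum:
  assumes "u \<in> words n d"
  shows "tmul bm n d r (\<lambda>v. c * (\<Sum>i\<in>I. y i v)) u = c * (\<Sum>i\<in>I. tmul bm n d r (y i) u)"
  using assms
  by (simp add: tmul_def sum_distrib_left sum_distrib_right mult_ac sum.swap[where A = I])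

lemma tmul_symz:
  assumes "r \<in> Sym n d" and "u \<in> words n d"
  shows "tmul bm n d r (symz n y) u
     = (1 / fact n) * (\<Sum>\<sigma>\<in>{\<sigma>. \<sigma> permutes {..<n}}. tmul bm n d r y (permw n \<sigma> u))"
  unfolding symz_def tmul_scaled_sum[OF assms(2)] using tmul_permw[OF assms(1) _ assms(2)] by simp

lemma nth_Cons_Cons: "2 \<le> m \<Longrightarrow> (a # b # xs) ! m = xs ! (m - 2)"
  by (cases m; cases "m - 1") auto

lemma nth0_nth1_drop2: "2 \<le> length w \<Longrightarrow> w ! 0 # w ! 1 # drop 2 w = w"
  by (cases w; cases "tl w") auto

lemma sum_words_delta0:
  assumes n: "2 \<le> n"
  shows "(\<Sum>v\<in>words n d. delta0 n d v * F v)
       = (1 / real d) * (\<Sum>k<d. F (k # k # replicate (n - 2) 0))"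
proof -
  define g where "g k = k # k # replicate (n - 2) (0::nat)" for k
  have g_words: "g ` {..<d} \<subseteq> words n d"
    using n by (auto simp: g_def words_def)
  have delta0_g: "delta0 n d (g k) = 1 / real d" if "k < d" for k
    using g_words that by (auto simp: delta0_def g_def nth_Cons_Cons)
  have "v \<in> g ` {..<d}" if v: "v \<in> words n d" and "delta0 n d v \<noteq> 0" for v
  proof -
    have diag: "v ! 0 = v ! 1" "\<forall>k\<in>{2..<n}. v ! k = 0" "length v = n" "v ! 0 < d"
      using v n \<open>delta0 n d v \<noteq> 0\<close> by (auto simp: delta0_def mem_words_iff split: if_splits)
    have "drop 2 v = replicate (n - 2) 0"
      using diag by (intro nth_equalityI) auto
    then have "v = g (v ! 0)"
      using nth0_nth1_drop2[of v] diag n by (simp add: g_def)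
    then show ?thesis
      using diag by blast
  qed
  then have "(\<Sum>v\<in>words n d. delta0 n d v * F v) = (\<Sum>v\<in>g ` {..<d}. delta0 n d v * F v)"
    by (intro sum.mono_neutral_right[OF finite_words g_words]) auto
  also have "\<dots> = (\<Sum>k<d. delta0 n d (g k) * F (g k))"
    by (rule sum.reindex_cong[where l = g]) (auto simp: inj_on_def g_def)
  also have "\<dots> = (\<Sum>k<d. (1 / real d) * F (g k))"
    by (rule sum.cong) (simp_all add: delta0_g)
  finally show ?thesis
    by (simp add: sum_distrib_left g_def)
qed

lemma sum_words_same_tail:
  assumes n: "2 \<le> n" and u: "u \<in> words n d"
  shows "(\<Sum>w\<in>words n d. if drop 2 w = drop 2 u then H w else 0)
       = (\<Sum>a<d. \<Sum>b<d. H (a # b # drop 2 u))"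
proof -
  define h where "h = (\<lambda>(a, b). a # b # drop 2 u)"
  have "{w \<in> words n d. drop 2 w = drop 2 u} = h ` ({..<d} \<times> {..<d})"
  proof safe
    fix w assume "w \<in> words n d" "drop 2 w = drop 2 u"
    then show "w \<in> h ` ({..<d} \<times> {..<d})"
      using nth0_nth1_drop2[of w] n
      by (auto simp: h_def mem_words_iff intro!: image_eqI[where x = "(w ! 0, w ! 1)"])
  qed (use drop_in_words[OF u] u n in \<open>auto simp: h_def Cons_Cons_in_words_iff words_def\<close>)
  moreover have "inj_on h ({..<d} \<times> {..<d})"
    by (auto simp: h_def inj_on_def)
  ultimately show ?thesis
    by (simp add: sum.inter_filter[OF finite_words, symmetric] sum.reindex
        sum.cartesian_product h_def case_prod_unfold)
qed

lemma sum_symmetric_contraction: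
  fixes R K :: "nat \<Rightarrow> nat \<Rightarrow> real"
  assumes R: "\<And>a b. a < d \<Longrightarrow> b < d \<Longrightarrow> R a b = R b a"
    and K: "\<And>a b. a < d \<Longrightarrow> b < d \<Longrightarrow> K a b + K b a = (if a = b then 2 * c else 0)"
  shows "(\<Sum>a<d. \<Sum>b<d. R a b * K a b) = c * (\<Sum>a<d. R a a)"
proof -
  have "(\<Sum>a<d. \<Sum>b<d. R a b * K a b) = (\<Sum>a<d. \<Sum>b<d. R a b * K b a)"
    using R by (subst sum.swap) (intro sum.cong; simp)
  then have "2 * (\<Sum>a<d. \<Sum>b<d. R a b * K a b) = (\<Sum>a<d. \<Sum>b<d. R a b * (K a b + K b a))"
    by (simp add: sum.distrib distrib_left)
  also have "\<dots> = (\<Sum>a<d. \<Sum>b<d. if a = b then R a a * (2 * c) else 0)"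
    using K by (intro sum.cong) auto
  also have "\<dots> = 2 * (c * (\<Sum>a<d. R a a))"
    by (simp add: sum_distrib_left mult_ac)
  finally show ?thesis
    by simp
qed

definition partial_trace :: "nat \<Rightarrow> (nat list \<Rightarrow> real) \<Rightarrow> nat list \<Rightarrow> real" where
  "partial_trace d r N = (\<Sum>a<d. r (a # a # N))"

lemma partial_trace_mset_eq:
  assumes "r \<in> Sym n d" and "N \<in> words (n - 2) d" and "mset N' = mset N" and "2 \<le> n"
  shows "partial_trace d r N' = partial_trace d r N"
  unfolding partial_trace_def
  using assms by (intro sum.cong refl Sym_eq_if_mset_eq) (auto simp: Cons_Cons_in_words_iff)

lemma diagonal_rearrangement_cases:
  assumes "mset v = mset (b # b # N)" and "v ! 0 = v ! 1" and "2 \<le> length v"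
  obtains "v ! 0 = b" "mset (drop 2 v) = mset N"
    | "v ! 0 \<noteq> b" "count (mset (drop 2 v)) b = count (mset N) b + 2"
proof -
  have "mset v = mset (drop 2 v) + {#v ! 0, v ! 1#}"
    using assms(3) by (subst nth0_nth1_drop2[symmetric]) auto
  then have eq: "mset (drop 2 v) + {#v ! 0, v ! 0#} = mset N + {#b, b#}"
    using assms(1,2) by simp
  show thesis
  proof (cases "v ! 0 = b")
    case True
    then show thesis
      using eq that(1) by simp
  next
    case False
    have "count (mset (drop 2 v) + {#v ! 0, v ! 0#}) b = count (mset N + {#b, b#}) b"
      by (simp only: eq)
    then show thesis
      using False that(2) by simp
  qed
qed

lemma partial_trace_of_rearrangement:
  assumes r: "r \<in> Sym n d" and n: "2 \<le> n" and N: "N \<in> words (n - 2) d"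
    and v: "v \<in> words n d" and perm: "mset v = mset (b # b # N)"
    and more_b: "\<And>N'. N' \<in> words (n - 2) d \<Longrightarrow> count (mset N) b < count (mset N') b \<Longrightarrow>
      partial_trace d r N' = 0"
  shows "(if v ! 0 = v ! 1 then partial_trace d r (drop 2 v) else 0)
       = (if v ! 0 = b \<and> v ! 1 = b then partial_trace d r N else 0)"
proof (cases "v ! 0 = v ! 1")
  case diag: True
  have "2 \<le> length v"
    using v n by (simp add: words_def)
  show ?thesis
  proof (cases rule: diagonal_rearrangement_cases[OF perm diag \<open>2 \<le> length v\<close>])
    case 1
    then show ?thesis
      using partial_trace_mset_eq[OF r N 1(2) n] diag by simp
  next
    case 2
    then have "partial_trace d r (drop 2 v) = 0"
      using more_b drop_in_words[OF v] by simp
    then show ?thesis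
      using 2 diag by simp
  qed
qed auto

text \<open>\<open>bm a k p\<close> is the \<open>e\<^sub>p\<close>-coordinate of \<open>e\<^sub>a e\<^sub>k\<close> in an orthonormal basis with
  \<open>e\<^sub>0 = 1\<close>. The second axiom is the coordinate form of
  \<open>\<langle>x\<^sup>* z, y\<^sup>* w\<rangle> + \<langle>y\<^sup>* z, x\<^sup>* w\<rangle> = 2 \<langle>x, y\<rangle> \<langle>z, w\<rangle>\<close>, which holds in every composition
  algebra.\<close>

locale composition_table =
  fixes bm :: "nat \<Rightarrow> nat \<Rightarrow> nat \<Rightarrow> real" and d :: nat
  assumes bm_right_unit: "a < d \<Longrightarrow> p < d \<Longrightarrow> bm a 0 p = (if a = p then 1 else 0)"
    and bm_contraction: "a < d \<Longrightarrow> c < d \<Longrightarrow> p < d \<Longrightarrow> q < d \<Longrightarrow>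
      (\<Sum>k<d. bm a k p * bm c k q) + (\<Sum>k<d. bm c k p * bm a k q) = (if a = c \<and> p = q then 2 else 0)"
begin

lemma prod_bm_delta0_word:
  assumes n: "2 \<le> n" and w: "w \<in> words n d" and u: "u \<in> words n d"
  shows "(\<Prod>m<n. bm (w ! m) ((k # k # replicate (n - 2) 0) ! m) (u ! m))
       = bm (w ! 0) k (u ! 0) * bm (w ! 1) k (u ! 1) * (if drop 2 w = drop 2 u then 1 else 0)"
proof -
  obtain m where m: "n = Suc (Suc m)"
    using n by (metis add_2_eq_Suc le_Suc_ex)
  have lengths: "length w = n" "length u = n"
    using w u by (simp_all add: words_def)
  have split: "(\<Prod>i<n. F i) = F 0 * F 1 * (\<Prod>i<m. F (Suc (Suc i)))" for F :: "nat \<Rightarrow> real"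
    unfolding m prod.lessThan_Suc_shift by simp
  have "(\<Prod>i<m. bm (w ! Suc (Suc i)) ((k # k # replicate (n - 2) 0) ! Suc (Suc i)) (u ! Suc (Suc i)))
      = (\<Prod>i<m. if w ! Suc (Suc i) = u ! Suc (Suc i) then 1 else 0)"
    using w u m by (intro prod.cong refl) (simp add: bm_right_unit mem_words_iff)
  also have "\<dots> = (if \<forall>i<m. w ! Suc (Suc i) = u ! Suc (Suc i) then 1 else 0)"
    by (induction m) (auto simp: less_Suc_eq)
  also have "\<dots> = (if drop 2 w = drop 2 u then 1 else 0)"
    using lengths m by (simp add: list_eq_iff_nth_eq)
  finally show ?thesis
    by (simp add: split)
qed

lemma tmul_delta0:
  assumes n: "2 \<le> n" and r: "r \<in> Sym n d" and u: "u \<in> words n d"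
  shows "tmul bm n d r (delta0 n d) u
       = (if u ! 0 = u ! 1 then partial_trace d r (drop 2 u) else 0) / real d"
proof -
  define K where "K a b = (\<Sum>k<d. bm a k (u ! 0) * bm b k (u ! 1))" for a b
  let ?P = "\<lambda>w v. \<Prod>m<n. bm (w ! m) (v ! m) (u ! m)"
  have "tmul bm n d r (delta0 n d) u
      = (\<Sum>w\<in>words n d. r w * (\<Sum>v\<in>words n d. delta0 n d v * ?P w v))"
    using u by (simp add: tmul_def sum_distrib_left mult_ac)
  also have "\<dots> = (\<Sum>w\<in>words n d. r w * ((1 / real d) * (\<Sum>k<d. ?P w (k # k # replicate (n - 2) 0))))"
    by (simp only: sum_words_delta0[OF n])
  also have "\<dots> = (1 / real d) * (\<Sum>w\<in>words n d. if drop 2 w = drop 2 u then r w * K (w ! 0) (w ! 1) else 0)"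
  proof -
    have "r w * (\<Sum>k<d. ?P w (k # k # replicate (n - 2) 0))
        = (if drop 2 w = drop 2 u then r w * K (w ! 0) (w ! 1) else 0)" if "w \<in> words n d" for w
      using that u by (cases "drop 2 w = drop 2 u")
        (simp_all add: prod_bm_delta0_word[OF n] K_def sum_distrib_left mult_ac)
    then show ?thesis
      by (simp only: sum_distrib_left[symmetric] mult.left_commute[of "r _"] cong: sum.cong)
  qed
  also have "\<dots> = (1 / real d) * (\<Sum>a<d. \<Sum>b<d. r (a # b # drop 2 u) * K a b)"
    by (simp add: sum_words_same_tail[OF n u])
  also have "\<dots> = (1 / real d) * ((if u ! 0 = u ! 1 then 1 else 0) * partial_trace d r (drop 2 u))"
  proof -
    have tail: "drop 2 u \<in> words (n - 2) d"
      using drop_in_words[OF u] .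
    have "r (a # b # drop 2 u) = r (b # a # drop 2 u)" if "a < d" "b < d" for a b
      using r tail that n by (intro Sym_eq_if_mset_eq) (auto simp: Cons_Cons_in_words_iff)
    moreover have "u ! 0 < d" "u ! 1 < d"
      using u n by (auto simp: mem_words_iff)
    then have "K a b + K b a = (if a = b then 2 * (if u ! 0 = u ! 1 then 1 else 0) else 0)"
      if "a < d" "b < d" for a b
      using bm_contraction that by (auto simp: K_def)
    ultimately show ?thesis
      by (simp add: sum_symmetric_contraction partial_trace_def)
  qed
  finally show ?thesis
    by simp
qed

lemma tmul_delta:
  assumes n: "2 \<le> n" and r: "r \<in> Sym n d" and u: "u \<in> words n d"
  shows "tmul bm n d r (delta n d) u = (\<Sum>\<sigma>\<in>{\<sigma>. \<sigma> permutes {..<n}}.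
           if permw n \<sigma> u ! 0 = permw n \<sigma> u ! 1 then partial_trace d r (drop 2 (permw n \<sigma> u)) else 0)
         / (fact n * real d)"
  unfolding delta_def tmul_symz[OF r u]
  using tmul_delta0[OF n r permw_in_words[OF _ u]] by (simp add: sum_divide_distrib ac_simps)

lemma partial_trace_vanishes:
  assumes n: "2 \<le> n" and b: "b < d" and r: "r \<in> Sym n d"
    and x: "tmul bm n d r (delta n d) \<in> Sym n b"
    and N: "N \<in> words (n - 2) d"
  shows "partial_trace d r N = 0"
  using N
proof (induction "n - 2 - count (mset N) b" arbitrary: N rule: less_induct)
  case less
  let ?u = "b # b # N"
  define C where "C \<sigma> \<longleftrightarrow> permw n \<sigma> ?u ! 0 = b \<and> permw n \<sigma> ?u ! 1 = b" for \<sigma>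
  let ?PS = "{\<sigma>. \<sigma> permutes {..<n}}"
  have u: "?u \<in> words n d" and length_u: "length ?u = n"
    using less.prems b n by (auto simp: Cons_Cons_in_words_iff words_def)
  have fin: "finite ?PS"
    using finite_permutations[of "{..<n}"] by simp
  have more_b: "partial_trace d r N' = 0"
    if "N' \<in> words (n - 2) d" and "count (mset N) b < count (mset N') b" for N'
  proof -
    have "count (mset N') b \<le> n - 2"
      using count_le_size[of "mset N'" b] that(1) by (simp add: words_def)
    then show ?thesis
      using less.hyps that by simp
  qed
  have "?u \<notin> words n b"
    by (simp add: words_def)
  then have "0 = tmul bm n d r (delta n d) ?u"
    using x by (simp add: Sym_def is_tensor_def)
  also have "\<dots> = (\<Sum>\<sigma>\<in>?PS. if C \<sigma> then partial_trace d r N else 0) / (fact n * real d)"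
    unfolding tmul_delta[OF n r u] C_def
    using partial_trace_of_rearrangement[OF r n less.prems permw_in_words[OF _ u]
        mset_permw[OF _ length_u] more_b]
    by (intro arg_cong[where f = "\<lambda>x. x / _"] sum.cong) auto
  also have "\<dots> = card {\<sigma>\<in>?PS. C \<sigma>} * partial_trace d r N / (fact n * real d)"
    by (simp add: sum.inter_filter[OF fin, symmetric])
  finally have "card {\<sigma>\<in>?PS. C \<sigma>} * partial_trace d r N = 0"
    using b by simp
  moreover have "card {\<sigma>\<in>?PS. C \<sigma>} \<noteq> 0"
  proof -
    have "id \<in> {\<sigma>\<in>?PS. C \<sigma>}"
      using length_u by (simp add: C_def permw_eq_permute_list)
    moreover have "finite {\<sigma>\<in>?PS. C \<sigma>}"
      using fin by simp
    ultimately show ?thesis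
      by (metis card_0_eq empty_iff)
  qed
  ultimately show ?case
    by simp
qed

theorem Sym_inter_tmul_delta:
  assumes n: "2 \<le> n" and b: "b < d"
  shows "Sym n b \<inter> {tmul bm n d r (delta n d) | r. r \<in> Sym n d} = {\<lambda>_. 0}"
proof
  show "{\<lambda>_. 0} \<subseteq> Sym n b \<inter> {tmul bm n d r (delta n d) | r. r \<in> Sym n d}"
    by (auto simp: Sym_def is_tensor_def tmul_def fun_eq_iff intro!: exI[of _ "\<lambda>_. 0"])
  show "Sym n b \<inter> {tmul bm n d r (delta n d) | r. r \<in> Sym n d} \<subseteq> {\<lambda>_. 0}"
  proof clarify
    fix r assume r: "r \<in> Sym n d" and x: "tmul bm n d r (delta n d) \<in> Sym n b"
    have "tmul bm n d r (delta n d) u = 0" for u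
    proof (cases "u \<in> words n d")
      case True
      have "partial_trace d r (drop 2 (permw n \<sigma> u)) = 0" if "\<sigma> permutes {..<n}" for \<sigma>
        using partial_trace_vanishes[OF n b r x drop_in_words[OF permw_in_words[OF that True]]]
        by simp
      then show ?thesis
        unfolding tmul_delta[OF n r True] by (simp add: sum.neutral)
    qed (simp add: tmul_def)
    then show "tmul bm n d r (delta n d) = (\<lambda>_. 0)" ..
  qed
qed

end

text \<open>In the Cayley--Dickson basis \<open>e\<^sub>i e\<^sub>j = \<plusminus>e\<^bsub>i XOR j\<^esub>\<close>; \<open>xor_table s\<close> is the
  multiplication table with signs \<open>s\<close>.\<close>

definition xor_table :: "(nat \<Rightarrow> nat \<Rightarrow> int) \<Rightarrow> nat \<Rightarrow> nat \<Rightarrow> nat \<Rightarrow> real" where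
  "xor_table s i j k = (if k = i XOR j then of_int (s i j) else 0)"

lemma xor_cancel_left [simp]: "a XOR (a XOR k) = k" for a k :: nat
  by (simp flip: xor.assoc)

lemma sum_xor_table_products:
  assumes "a XOR p < d"
  shows "(\<Sum>k<d. xor_table s a k p * xor_table s c k q)
       = (if q = c XOR a XOR p then of_int (s a (a XOR p) * s c (a XOR p)) else 0)"
proof -
  have "xor_table s a k p * xor_table s c k q
      = (if k = a XOR p then if q = c XOR a XOR p then of_int (s a k * s c k) else 0 else 0)" for k
    by (auto simp: xor_table_def)
  then show ?thesis
    using assms by simp
qed

lemma composition_table_xor_table:
  assumes closed: "\<And>a b. a < d \<Longrightarrow> b < d \<Longrightarrow> a XOR b < d"
    and unit: "\<And>a. a < d \<Longrightarrow> s a 0 = 1"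
    and sign: "\<And>a k. a < d \<Longrightarrow> k < d \<Longrightarrow> s a k * s a k = 1"
    and cross_terms_cancel: "\<And>a c k. a < d \<Longrightarrow> c < d \<Longrightarrow> k < d \<Longrightarrow> a \<noteq> c \<Longrightarrow>
      s a k * s c k + s a (a XOR c XOR k) * s c (a XOR c XOR k) = 0"
  shows "composition_table (xor_table s) d"
proof
  fix a p assume "a < d" "p < d"
  then show "xor_table s a 0 p = (if a = p then 1 else 0)"
    by (simp add: xor_table_def unit)
next
  fix a c p q assume a: "a < d" and c: "c < d" and p: "p < d" and q: "q < d"
  define k where "k = a XOR p"
  have "c XOR p = a XOR c XOR k" "c XOR a XOR p = a XOR c XOR p"
    by (metis k_def xor.commute xor.left_commute xor_cancel_left)+
  then have "(\<Sum>k<d. xor_table s a k p * xor_table s c k q) + (\<Sum>k<d. xor_table s c k p * xor_table s a k q)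
      = (if q = a XOR c XOR p
         then of_int (s a k * s c k + s a (a XOR c XOR k) * s c (a XOR c XOR k)) else 0)"
    using sum_xor_table_products[OF closed[OF a p], of s c q]
      sum_xor_table_products[OF closed[OF c p], of s a q]
    by (simp add: k_def mult.commute[of "s c (c XOR p)"])
  also have "\<dots> = (if a = c \<and> p = q then 2 else 0)"
    using cross_terms_cancel[OF a c closed[OF a p]] sign[OF a closed[OF a p]]
    by (auto simp: k_def simp flip: of_int_mult of_int_add)
  finally show "(\<Sum>k<d. xor_table s a k p * xor_table s c k q) + (\<Sum>k<d. xor_table s c k p * xor_table s a k q)
      = (if a = c \<and> p = q then 2 else 0)" .
qed

definition octonion_sign :: "nat \<Rightarrow> nat \<Rightarrow> int" where
  "octonion_sign i j =
     [[1,  1,  1,  1,  1,  1,  1,  1],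
      [1, -1,  1, -1,  1, -1, -1,  1],
      [1, -1, -1,  1,  1,  1, -1, -1],
      [1,  1, -1, -1,  1, -1,  1, -1],
      [1, -1, -1, -1, -1,  1,  1,  1],
      [1,  1, -1,  1, -1, -1, -1,  1],
      [1,  1,  1, -1, -1,  1, -1, -1],
      [1, -1,  1,  1, -1, -1,  1, -1]] ! i ! j"

lemma less_8_cases: "(i::nat) < 8 \<Longrightarrow> i = 0 \<or> i = 1 \<or> i = 2 \<or> i = 3 \<or> i = 4 \<or> i = 5 \<or> i = 6 \<or> i = 7"
  by auto

lemma bmulO_eq_xor_table:
  assumes "i < 8" and "j < 8"
  shows "bmulO i j = xor_table octonion_sign i j"
proof
  fix k :: nat
  have "k < 8 \<or> 8 \<le> k"
    by auto
  then show "bmulO i j k = xor_table octonion_sign i j k"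
    using less_8_cases[OF assms(1)] less_8_cases[OF assms(2)]
    by (elim disjE)
      (auto simp: bmulO_def omul_def Let_def ofst_def osnd_def qmul_def qconj_def unitv_def
        xor_table_def octonion_sign_def dest!: less_8_cases)
qed

lemma omul_eq_qmul:
  assumes "\<And>k. 4 \<le> k \<Longrightarrow> x k = 0" and "\<And>k. 4 \<le> k \<Longrightarrow> y k = 0"
  shows "omul x y = qmul x y"
  using assms by (auto simp: fun_eq_iff omul_def Let_def ofst_def osnd_def qmul_def qconj_def)

lemma bmulH_eq_xor_table:
  assumes "i < 4" and "j < 4"
  shows "bmulH i j = xor_table octonion_sign i j"
  using assms omul_eq_qmul[of "unitv i" "unitv j"] bmulO_eq_xor_table[of i j]
  by (simp add: bmulH_def bmulO_def unitv_def)

lemma all_less_iff_list_all_upt: "(\<forall>i<n. P i) \<longleftrightarrow> list_all P [0..<n]"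
  by (auto simp: list_all_iff)

lemma octonion_sign_unit: "\<forall>a<8. octonion_sign a 0 = 1"
  unfolding all_less_iff_list_all_upt octonion_sign_def by code_simp

lemma octonion_sign_square: "\<forall>a<8. \<forall>k<8. octonion_sign a k * octonion_sign a k = 1"
  unfolding all_less_iff_list_all_upt octonion_sign_def by code_simp

lemma octonion_sign_cross_terms_cancel:
  "\<forall>a<8. \<forall>c<8. \<forall>k<8. a \<noteq> c \<longrightarrow>
     octonion_sign a k * octonion_sign c k
     + octonion_sign a (a XOR c XOR k) * octonion_sign c (a XOR c XOR k) = 0"
  unfolding all_less_iff_list_all_upt octonion_sign_def by code_simp

lemma composition_table_octonion_sign:
  assumes "d \<le> 8" and closed: "\<forall>a<d. \<forall>b<d. a XOR b < d"
  shows "composition_table (xor_table octonion_sign) d"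
proof (rule composition_table_xor_table)
  have lt: "x < 8" if "x < d" for x
    using that assms(1) by simp
  show "a XOR b < d" if "a < d" "b < d" for a b
    using closed that by blast
  show "octonion_sign a 0 = 1" if "a < d" for a
    using octonion_sign_unit lt that by blast
  show "octonion_sign a k * octonion_sign a k = 1" if "a < d" "k < d" for a k
    using octonion_sign_square lt that by blast
  show "octonion_sign a k * octonion_sign c k
      + octonion_sign a (a XOR c XOR k) * octonion_sign c (a XOR c XOR k) = 0"
    if "a < d" "c < d" "k < d" "a \<noteq> c" for a c k
    using octonion_sign_cross_terms_cancel lt that by blast
qed

lemma composition_table_octonions: "composition_table bmulO 8"
proof -
  have "\<forall>a<8. \<forall>b<8. a XOR b < (8::nat)"
    unfolding all_less_iff_list_all_upt by code_simp
  then interpret composition_table "xor_table octonion_sign" 8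
    by (rule composition_table_octonion_sign[OF order_refl])
  show ?thesis
    by unfold_locales (simp_all add: bmulO_eq_xor_table bm_right_unit bm_contraction)
qed

lemma composition_table_quaternions: "composition_table bmulH 4"
proof -
  have "\<forall>a<4. \<forall>b<4. a XOR b < (4::nat)"
    unfolding all_less_iff_list_all_upt by code_simp
  then interpret composition_table "xor_table octonion_sign" 4
    by (rule composition_table_octonion_sign[rotated]) simp
  show ?thesis
    by unfold_locales (simp_all add: bmulH_eq_xor_table bm_right_unit bm_contraction)
qed

theorem lemma2p7:
  fixes n :: nat
  assumes "2 \<le> n"
  shows "Sym n 2 \<inter> {tmul bmulH n 4 r (delta n 4) | r. r \<in> Sym n 4} = {(\<lambda>_. 0)}
     \<and> Sym n 4 \<inter> {tmul bmulO n 8 r (delta n 8) | r. r \<in> Sym n 8} = {(\<lambda>_. 0)}"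
  using composition_table.Sym_inter_tmul_delta[OF composition_table_quaternions assms]
    composition_table.Sym_inter_tmul_delta[OF composition_table_octonions assms]
  by simp

end
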